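(* Let $G=(V,E)$ be a graph, let $r:V\to\mathbb{Z}_+$, and let $S\subseteq V$. Then the following are equivalent: (i) $S$ is a vector connectivity set for $(G,r)$; (ii) for every non-empty set $X\subseteq V$ such that $G[X]$ is connected and $R(X)>|N_G(X)|$, we have $S\cap X\neq\emptyset$.
   Context: All graphs are finite, simple and undirected; $\mathbb{Z}_+=\{0,1,2,\dots\}$. For $X\subseteq V$, $N_G(X)=\left(\bigcup_{v\in X}N_G(v)\right)\setminus X$ and $G[X]$ is the subgraph induced by $X$. For a vertex requirement function $r:V\to\mathbb{Z}_+$ and non-empty $X\subseteq V$, $R(X)=\max_{x\in X} r(x)$. For $S\subseteq V$ and $v\in V\setminus S$, a $v$--$S$ fan of order $k$ is a collection of $k$ paths $P_1,\dots,P_k$, each connecting $v$ to a vertex of $S$, such that $V(P_i)\cap V(P_j)=\{v\}$ for all $i<j$; $v$ is $k$-linked to $S$ if such a fan exists. A vector connectivity set for $(G,r)$ is a set $S\subseteq V$ such that every $v\in V\setminus S$ is $r(v)$-linked to $S$. *)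

theory Defs
  imports Main
begin

definition graph :: "'a set \<Rightarrow> ('a \<Rightarrow> 'a \<Rightarrow> bool) \<Rightarrow> bool" where
  "graph V E \<longleftrightarrow> finite V \<and> (\<forall>x y. E x y \<longrightarrow> E y x) \<and> (\<forall>x. \<not> E x x)
     \<and> (\<forall>x y. E x y \<longrightarrow> x \<in> V \<and> y \<in> V)"

definition is_path :: "'a set \<Rightarrow> ('a \<Rightarrow> 'a \<Rightarrow> bool) \<Rightarrow> 'a list \<Rightarrow> bool" where
  "is_path V E p \<longleftrightarrow> p \<noteq> [] \<and> distinct p \<and> set p \<subseteq> V
     \<and> (\<forall>i. Suc i < length p \<longrightarrow> E (p ! i) (p ! Suc i))"

definition nbhd :: "('a \<Rightarrow> 'a \<Rightarrow> bool) \<Rightarrow> 'a set \<Rightarrow> 'a set" where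
  "nbhd E X = {u. \<exists>x\<in>X. E x u} - X"

definition induced_connected :: "'a set \<Rightarrow> ('a \<Rightarrow> 'a \<Rightarrow> bool) \<Rightarrow> 'a set \<Rightarrow> bool" where
  "induced_connected V E X \<longleftrightarrow> (\<forall>x\<in>X. \<forall>y\<in>X. \<exists>p. is_path V E p \<and> set p \<subseteq> X
       \<and> hd p = x \<and> last p = y)"

definition Rmax :: "('a \<Rightarrow> nat) \<Rightarrow> 'a set \<Rightarrow> nat" where
  "Rmax r X = Max (r ` X)"

definition fan :: "'a set \<Rightarrow> ('a \<Rightarrow> 'a \<Rightarrow> bool) \<Rightarrow> 'a \<Rightarrow> 'a set \<Rightarrow> 'a list list \<Rightarrow> bool" where
  "fan V E v S Ps \<longleftrightarrow>
     (\<forall>P\<in>set Ps. is_path V E P \<and> hd P = v \<and> last P \<in> S)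
     \<and> (\<forall>i j. i < j \<and> j < length Ps \<longrightarrow> set (Ps ! i) \<inter> set (Ps ! j) = {v})"

definition k_linked :: "'a set \<Rightarrow> ('a \<Rightarrow> 'a \<Rightarrow> bool) \<Rightarrow> nat \<Rightarrow> 'a \<Rightarrow> 'a set \<Rightarrow> bool" where
  "k_linked V E k v S \<longleftrightarrow> (\<exists>Ps. fan V E v S Ps \<and> length Ps = k)"

definition vc_set :: "'a set \<Rightarrow> ('a \<Rightarrow> 'a \<Rightarrow> bool) \<Rightarrow> ('a \<Rightarrow> nat) \<Rightarrow> 'a set \<Rightarrow> bool" where
  "vc_set V E r S \<longleftrightarrow> (\<forall>v\<in>V - S. k_linked V E (r v) v S)"

end

theory Submission
  imports Defs
begin

text \<open>(i) implies (ii): if X misses S, pick x in X with r x = R(X). Every path of an x--S fan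
  leaves X through a vertex of N(X), and distinct paths of the fan do so through distinct
  vertices, so R(X) <= |N(X)|.
  (ii) implies (i): if v is not (r v)-linked to S, Menger's theorem in G - v yields a set T of
  fewer than r v vertices separating the neighbours of v from S. The component X of v in G - T
  is connected, misses S and has N(X) contained in T, so R(X) >= r v > |N(X)|.
  Menger's theorem is proved by Diestel's induction on the number of edges.\<close>

section \<open>Paths and reachability\<close>

lemma is_path_iff:
  "is_path V E p \<longleftrightarrow> p \<noteq> [] \<and> distinct p \<and> set p \<subseteq> V \<and> successively E p"
  by (auto simp: is_path_def successively_conv_nth)

lemma is_path_ends_in_set: "is_path V E p \<Longrightarrow> hd p \<in> set p \<and> last p \<in> set p"
  by (simp add: is_path_iff)

lemma graph_sym: "graph V E \<Longrightarrow> E x y \<Longrightarrow> E y x"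
  by (auto simp: graph_def)

lemma is_path_mono: "is_path V E' p \<Longrightarrow> E' \<le> E \<Longrightarrow> is_path V E p"
  by (auto simp: is_path_iff elim: successively_mono)

lemma is_path_rev: "graph V E \<Longrightarrow> is_path V E (rev p) \<longleftrightarrow> is_path V E p"
  by (auto simp: is_path_iff intro: successively_mono dest: graph_sym)

lemma is_path_prefix: "is_path V E (xs @ y # ys) \<Longrightarrow> is_path V E (xs @ [y])"
  by (auto simp: is_path_iff successively_append_iff)

lemma is_path_suffix: "is_path V E (xs @ y # ys) \<Longrightarrow> is_path V E (y # ys)"
  by (auto simp: is_path_iff successively_append_iff)

lemma is_path_snoc:
  "is_path V E p \<Longrightarrow> E (last p) b \<Longrightarrow> b \<in> V \<Longrightarrow> b \<notin> set p \<Longrightarrow> is_path V E (p @ [b])"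
  by (auto simp: is_path_iff successively_append_iff)

lemma is_path_tl: "is_path V E p \<Longrightarrow> tl p \<noteq> [] \<Longrightarrow> is_path V E (tl p)"
  by (cases p) (auto simp: is_path_iff successively_Cons)

lemma is_path_butlast: "is_path V E p \<Longrightarrow> butlast p \<noteq> [] \<Longrightarrow> is_path V E (butlast p)"
proof -
  assume p: "is_path V E p" and ne: "butlast p \<noteq> []"
  have "p = butlast p @ [last p]" using p by (simp add: is_path_iff)
  then have "successively E (butlast p)" using p by (metis is_path_iff successively_append_iff)
  then show ?thesis using p ne by (auto simp: is_path_iff distinct_butlast dest: in_set_butlastD)
qed

text \<open>Being a reflexive closure, reach_within relates every x to itself, even for x outside W;
  hence the hypotheses x \<in> W below.\<close>

abbreviation reach_within :: "('a \<Rightarrow> 'a \<Rightarrow> bool) \<Rightarrow> 'a set \<Rightarrow> 'a \<Rightarrow> 'a \<Rightarrow> bool" where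
  "reach_within E W \<equiv> (\<lambda>x y. E x y \<and> x \<in> W \<and> y \<in> W)\<^sup>*\<^sup>*"

lemma reach_within_walk:
  "successively E p \<Longrightarrow> p \<noteq> [] \<Longrightarrow> set p \<subseteq> W \<Longrightarrow> reach_within E W (hd p) (last p)"
proof (induction p rule: induct_list012)
  case (3 x y zs)
  then have "reach_within E W y (last (y # zs))" by (simp add: successively_Cons)
  with 3 show ?case by (auto simp: successively_Cons intro: converse_rtranclp_into_rtranclp)
qed auto

lemma reach_within_to_vertex:
  assumes "successively E p" "set p \<subseteq> W" "u \<in> set p"
  shows "reach_within E W (hd p) u"
proof -
  obtain xs ys where p: "p = xs @ u # ys" using split_list[OF assms(3)] by blast
  then have "reach_within E W (hd (xs @ [u])) (last (xs @ [u]))"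
    using assms by (intro reach_within_walk) (auto simp: successively_append_iff)
  then show ?thesis using p by (cases xs) auto
qed

lemma reach_within_from_vertex:
  assumes "successively E p" "set p \<subseteq> W" "u \<in> set p"
  shows "reach_within E W u (last p)"
proof -
  obtain xs ys where p: "p = xs @ u # ys" using split_list[OF assms(3)] by blast
  then have "reach_within E W (hd (u # ys)) (last (u # ys))"
    using assms by (intro reach_within_walk) (auto simp: successively_append_iff)
  then show ?thesis using p by simp
qed

lemma path_of_reach_within:
  assumes "reach_within E W x y" "x \<in> W" "W \<subseteq> V"
  shows "\<exists>p. is_path V E p \<and> hd p = x \<and> last p = y \<and> set p \<subseteq> W"
  using assms(1)
proof (induction rule: rtranclp_induct)
  case base
  then show ?case using assms by (intro exI[of _ "[x]"]) (auto simp: is_path_iff)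
next
  case (step y z)
  then obtain p where p: "is_path V E p" "hd p = x" "last p = y" "set p \<subseteq> W" by blast
  show ?case
  proof (cases "z \<in> set p")
    case True
    then obtain xs ys where "p = xs @ z # ys" by (meson split_list)
    with p show ?thesis
      by (intro exI[of _ "xs @ [z]"]) (auto simp: is_path_prefix hd_append split: if_splits)
  next
    case False
    with p step assms show ?thesis
      by (intro exI[of _ "p @ [z]"]) (auto simp: is_path_iff successively_append_iff)
  qed
qed

lemma reach_within_closed: "reach_within E W x y \<Longrightarrow> x \<in> W \<Longrightarrow> y \<in> W"
  by (induction rule: rtranclp_induct) auto

lemma reach_within_sym:
  assumes "graph V E" "reach_within E W x y"
  shows "reach_within E W y x"
  using assms(2)
  by (induction rule: rtranclp_induct) (use assms(1) in \<open>auto intro: converse_rtranclp_into_rtranclp dest: graph_sym\<close>)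

section \<open>Separators and linkages\<close>

definition separates :: "'a set \<Rightarrow> ('a \<Rightarrow> 'a \<Rightarrow> bool) \<Rightarrow> 'a set \<Rightarrow> 'a set \<Rightarrow> 'a set \<Rightarrow> bool" where
  "separates V E A B T \<longleftrightarrow> (\<forall>p. is_path V E p \<longrightarrow> hd p \<in> A \<longrightarrow> last p \<in> B \<longrightarrow> set p \<inter> T \<noteq> {})"

definition linkage :: "'a set \<Rightarrow> ('a \<Rightarrow> 'a \<Rightarrow> bool) \<Rightarrow> 'a set \<Rightarrow> 'a set \<Rightarrow> 'a list set \<Rightarrow> bool" where
  "linkage V E A B P \<longleftrightarrow> (\<forall>p\<in>P. is_path V E p \<and> hd p \<in> A \<and> last p \<in> B)
     \<and> (\<forall>p\<in>P. \<forall>q\<in>P. p \<noteq> q \<longrightarrow> set p \<inter> set q = {})"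

lemma separates_swap:
  assumes "graph V E" "separates V E A B T"
  shows "separates V E B A T"
  unfolding separates_def
proof (intro allI impI)
  fix p assume p: "is_path V E p" "hd p \<in> B" "last p \<in> A"
  then have "is_path V E (rev p)" "p \<noteq> []" using is_path_rev[OF assms(1)] by (auto simp: is_path_iff)
  moreover have "is_path V E (rev p) \<longrightarrow> hd (rev p) \<in> A \<longrightarrow> last (rev p) \<in> B \<longrightarrow> set (rev p) \<inter> T \<noteq> {}"
    using assms(2) unfolding separates_def by blast
  ultimately have "set (rev p) \<inter> T \<noteq> {}" using p by (simp add: hd_rev last_rev)
  then show "set p \<inter> T \<noteq> {}" by simp
qed

lemma separates_sym: "graph V E \<Longrightarrow> separates V E A B T \<longleftrightarrow> separates V E B A T"
  using separates_swap by blast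

lemma separates_no_reach_within:
  assumes "separates V E A B T" "x \<in> A" "x \<in> V - T" "reach_within E (V - T) x y" "y \<in> B"
  shows False
proof -
  obtain p where "is_path V E p" "hd p = x" "last p = y" "set p \<subseteq> V - T"
    using path_of_reach_within[OF assms(4,3)] by blast
  with assms(1,2,5) show False unfolding separates_def by blast
qed

definition source_side :: "'a set \<Rightarrow> ('a \<Rightarrow> 'a \<Rightarrow> bool) \<Rightarrow> 'a set \<Rightarrow> 'a set \<Rightarrow> 'a set" where
  "source_side V E A T = {u. \<exists>x\<in>A. x \<in> V - T \<and> reach_within E (V - T) x u}"

definition target_side :: "'a set \<Rightarrow> ('a \<Rightarrow> 'a \<Rightarrow> bool) \<Rightarrow> 'a set \<Rightarrow> 'a set \<Rightarrow> 'a set" where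
  "target_side V E B T = {u. \<exists>y\<in>B. reach_within E (V - T) u y}"

lemma sides_disjoint:
  assumes "separates V E A B T"
  shows "source_side V E A T \<inter> target_side V E B T = {}"
proof (intro equalityI subsetI)
  fix u assume "u \<in> source_side V E A T \<inter> target_side V E B T"
  then obtain x y where x: "x \<in> A" "x \<in> V - T" and y: "y \<in> B"
    and xu: "reach_within E (V - T) x u" and uy: "reach_within E (V - T) u y"
    unfolding source_side_def target_side_def by blast
  from xu uy have "reach_within E (V - T) x y" by (rule rtranclp_trans)
  with separates_no_reach_within[OF assms x this y] show "u \<in> {}" by blast
qed simp

lemma source_side_disjoint: "source_side V E A T \<inter> T = {}"
proof (intro equalityI subsetI)
  fix u assume "u \<in> source_side V E A T \<inter> T"
  then obtain x where "x \<in> V - T" "reach_within E (V - T) x u" "u \<in> T"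
    unfolding source_side_def by blast
  then show "u \<in> {}" using reach_within_closed[of E "V - T" x u] by blast
qed simp

lemma path_in_source_side:
  assumes "is_path V E p" "hd p \<in> A" "set p \<inter> T = {}"
  shows "set p \<subseteq> source_side V E A T"
proof
  fix u assume "u \<in> set p"
  have W: "set p \<subseteq> V - T" using assms(1,3) unfolding is_path_iff by blast
  then have "reach_within E (V - T) (hd p) u"
    using reach_within_to_vertex[of E p "V - T" u] assms(1) \<open>u \<in> set p\<close> by (simp add: is_path_iff)
  moreover have "hd p \<in> V - T" using subsetD[OF W] is_path_ends_in_set[OF assms(1)] by blast
  ultimately show "u \<in> source_side V E A T" using assms(2) unfolding source_side_def by blast
qed

lemma path_in_target_side:
  assumes "is_path V E q" "last q \<in> B" "set q \<inter> T = {}"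
  shows "set q \<subseteq> target_side V E B T"
proof
  fix u assume "u \<in> set q"
  have "set q \<subseteq> V - T" using assms(1,3) unfolding is_path_iff by blast
  then have "reach_within E (V - T) u (last q)"
    using reach_within_from_vertex[of E q "V - T" u] assms(1) \<open>u \<in> set q\<close> by (simp add: is_path_iff)
  then show "u \<in> target_side V E B T" using assms(2) unfolding target_side_def by blast
qed

lemma linkage_mono: "linkage V E' A B P \<Longrightarrow> E' \<le> E \<Longrightarrow> linkage V E A B P"
  unfolding linkage_def by (blast intro: is_path_mono)

lemma linkage_image:
  assumes "\<And>c. c \<in> C \<Longrightarrow> is_path V E (f c) \<and> hd (f c) \<in> A \<and> last (f c) \<in> B"
    and "\<And>c d. c \<in> C \<Longrightarrow> d \<in> C \<Longrightarrow> c \<noteq> d \<Longrightarrow> set (f c) \<inter> set (f d) = {}"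
  shows "linkage V E A B (f ` C) \<and> card (f ` C) = card C"
proof -
  have "inj_on f C"
  proof (rule inj_onI, rule ccontr)
    fix c d assume "c \<in> C" "d \<in> C" "f c = f d" "c \<noteq> d"
    then have "set (f c) = {}" using assms(2)[of c d] by simp
    then show False using assms(1)[OF \<open>c \<in> C\<close>] by (simp add: is_path_iff)
  qed
  moreover have "linkage V E A B (f ` C)"
    unfolding linkage_def
  proof (rule conjI; intro ballI impI)
    fix p assume "p \<in> f ` C"
    then show "is_path V E p \<and> hd p \<in> A \<and> last p \<in> B" using assms(1) by blast
  next
    fix p q assume "p \<in> f ` C" "q \<in> f ` C" "p \<noteq> q"
    then show "set p \<inter> set q = {}" using assms(2) by blast
  qed
  ultimately show ?thesis by (simp add: card_image)
qed

lemma disjoint_paths_endpoints: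
  assumes disj: "\<And>p q. p \<in> P \<Longrightarrow> q \<in> P \<Longrightarrow> p \<noteq> q \<Longrightarrow> set p \<inter> set q = {}"
    and endpoint: "\<And>p. p \<in> P \<Longrightarrow> e p \<in> set p \<and> e p \<in> C"
    and "finite C" "card P = card C"
  shows "e ` P = C" "\<And>p c. p \<in> P \<Longrightarrow> c \<in> C \<Longrightarrow> c \<in> set p \<Longrightarrow> c = e p"
proof -
  have "inj_on e P"
  proof (rule inj_onI, rule ccontr)
    fix p q assume "p \<in> P" "q \<in> P" "e p = e q" "p \<noteq> q"
    then show False using disj[of p q] endpoint[of p] endpoint[of q] by auto
  qed
  moreover have "e ` P \<subseteq> C" using endpoint by blast
  ultimately show eP: "e ` P = C"
    using assms(3,4) by (metis card_image card_subset_eq)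
  fix p c assume "p \<in> P" "c \<in> C" "c \<in> set p"
  then obtain q where "q \<in> P" "c = e q" using eP by blast
  then show "c = e p"
    using disj[of p q] endpoint[of q] \<open>p \<in> P\<close> \<open>c \<in> set p\<close> by blast
qed

lemma linkage_saturated_target:
  assumes "linkage V E A B P" "finite B" "card P = card B"
  shows "last ` P = B" "\<And>p. p \<in> P \<Longrightarrow> set (butlast p) \<inter> B = {}"
proof -
  have P: "\<And>p. p \<in> P \<Longrightarrow> distinct p \<and> p \<noteq> [] \<and> last p \<in> B"
    using assms(1) by (auto simp: linkage_def is_path_iff)
  have disj: "\<And>p q. p \<in> P \<Longrightarrow> q \<in> P \<Longrightarrow> p \<noteq> q \<Longrightarrow> set p \<inter> set q = {}"
    using assms(1) by (auto simp: linkage_def)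
  have ends: "\<And>p. p \<in> P \<Longrightarrow> last p \<in> set p \<and> last p \<in> B" using P by simp
  show "last ` P = B"
    by (rule disjoint_paths_endpoints(1)[where e = last]) (use disj ends assms(2,3) in auto)
  fix p assume "p \<in> P"
  moreover have "last p \<notin> set (butlast p)"
  proof -
    have "distinct (butlast p @ [last p])" using P[OF \<open>p \<in> P\<close>] by simp
    then show ?thesis by simp
  qed
  moreover have "\<And>c. c \<in> B \<Longrightarrow> c \<in> set p \<Longrightarrow> c = last p"
    by (rule disjoint_paths_endpoints(2)[where e = last]) (use disj ends assms(2,3) \<open>p \<in> P\<close> in auto)
  ultimately show "set (butlast p) \<inter> B = {}" by (blast dest: in_set_butlastD)
qed

lemma linkage_saturated_source:
  assumes "linkage V E A B P" "finite A" "card P = card A"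
  shows "hd ` P = A" "\<And>p. p \<in> P \<Longrightarrow> set (tl p) \<inter> A = {}"
proof -
  have P: "\<And>p. p \<in> P \<Longrightarrow> distinct p \<and> p \<noteq> [] \<and> hd p \<in> A"
    using assms(1) by (auto simp: linkage_def is_path_iff)
  have disj: "\<And>p q. p \<in> P \<Longrightarrow> q \<in> P \<Longrightarrow> p \<noteq> q \<Longrightarrow> set p \<inter> set q = {}"
    using assms(1) by (auto simp: linkage_def)
  have ends: "\<And>p. p \<in> P \<Longrightarrow> hd p \<in> set p \<and> hd p \<in> A" using P by simp
  show "hd ` P = A"
    by (rule disjoint_paths_endpoints(1)[where e = hd]) (use disj ends assms(2,3) in auto)
  fix p assume "p \<in> P"
  moreover have "hd p \<notin> set (tl p)"
    using P[OF \<open>p \<in> P\<close>] by (cases p) auto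
  moreover have "\<And>c. c \<in> A \<Longrightarrow> c \<in> set p \<Longrightarrow> c = hd p"
    by (rule disjoint_paths_endpoints(2)[where e = hd]) (use disj ends assms(2,3) \<open>p \<in> P\<close> in auto)
  moreover have "set (tl p) \<subseteq> set p" by (cases p) auto
  ultimately show "set (tl p) \<inter> A = {}" by blast
qed

text \<open>Saturation keeps every path of the linkage off T until its last vertex.\<close>

lemma linkage_in_source_side:
  assumes P: "linkage V E A (insert a T) P" "card P = card (insert a T)" "finite T"
    and "a \<in> source_side V E A T" and "p \<in> P"
  shows "set p \<subseteq> source_side V E A T \<union> T"
proof -
  have p: "is_path V E p" "hd p \<in> A" "last p \<in> insert a T"
    using P(1) \<open>p \<in> P\<close> unfolding linkage_def by auto
  have "set (butlast p) \<subseteq> source_side V E A T"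
  proof (cases "butlast p = []")
    case False
    then have "hd (butlast p) = hd p" by (cases p) (auto split: if_splits)
    moreover have "set (butlast p) \<inter> T = {}"
      using linkage_saturated_target(2)[OF P(1) _ P(2) \<open>p \<in> P\<close>] P(3) by auto
    ultimately show ?thesis
      using path_in_source_side[OF is_path_butlast[OF p(1) False]] p(2) by simp
  qed simp
  moreover have "set p = insert (last p) (set (butlast p))"
    using p(1) by (cases p rule: rev_cases) (auto simp: is_path_iff)
  ultimately show ?thesis using p(3) \<open>a \<in> source_side V E A T\<close> by auto
qed

lemma linkage_in_target_side:
  assumes Q: "linkage V E (insert b T) B Q" "card Q = card (insert b T)" "finite T"
    and "b \<in> target_side V E B T" and "q \<in> Q"
  shows "set q \<subseteq> target_side V E B T \<union> T"
proof -
  have q: "is_path V E q" "hd q \<in> insert b T" "last q \<in> B"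
    using Q(1) \<open>q \<in> Q\<close> unfolding linkage_def by auto
  have "set (tl q) \<subseteq> target_side V E B T"
  proof (cases "tl q = []")
    case False
    then have "last (tl q) = last q" by (simp add: last_tl)
    moreover have "set (tl q) \<inter> T = {}"
      using linkage_saturated_source(2)[OF Q(1) _ Q(2) \<open>q \<in> Q\<close>] Q(3) by auto
    ultimately show ?thesis
      using path_in_target_side[OF is_path_tl[OF q(1) False]] q(3) by simp
  qed simp
  moreover have "set q = insert (hd q) (set (tl q))"
    using q(1) by (cases q) (auto simp: is_path_iff)
  ultimately show ?thesis using q(2) \<open>b \<in> target_side V E B T\<close> by auto
qed

lemma is_path_join:
  assumes "is_path V E p" "is_path V E q" "last p = hd q" "set p \<inter> set (tl q) = {}"
  shows "is_path V E (p @ tl q)"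
proof -
  have "q = hd q # tl q" using assms(2) by (simp add: is_path_iff)
  then have "successively E (last p # tl q)" "distinct (tl q)" "set (tl q) \<subseteq> V"
    using assms(2,3) by (metis is_path_iff distinct.simps(2) set_subset_Cons subset_trans)+
  with assms(1,4) show ?thesis
    by (auto simp: is_path_iff successively_append_iff successively_Cons)
qed

lemma linkage_join_indexed:
  assumes p: "\<And>c. c \<in> C \<Longrightarrow> is_path V E (p c) \<and> hd (p c) \<in> A \<and> last (p c) = c"
    and q: "\<And>c. c \<in> C \<Longrightarrow> is_path V E (q c) \<and> hd (q c) = c \<and> last (q c) \<in> B"
    and p_disj: "\<And>c d. c \<in> C \<Longrightarrow> d \<in> C \<Longrightarrow> c \<noteq> d \<Longrightarrow> set (p c) \<inter> set (p d) = {}"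
    and q_disj: "\<And>c d. c \<in> C \<Longrightarrow> d \<in> C \<Longrightarrow> c \<noteq> d \<Longrightarrow> set (q c) \<inter> set (q d) = {}"
    and meet: "\<And>c d u. c \<in> C \<Longrightarrow> d \<in> C \<Longrightarrow> u \<in> set (p c) \<Longrightarrow> u \<in> set (q d) \<Longrightarrow> u = d"
  shows "linkage V E A B ((\<lambda>c. p c @ tl (q c)) ` C) \<and> card ((\<lambda>c. p c @ tl (q c)) ` C) = card C"
proof -
  have q_split: "q d = d # tl (q d)" "distinct (q d)" if "d \<in> C" for d
    using q[OF that] by (auto simp: is_path_iff) (metis list.collapse)
  have p_tl: "set (p c) \<inter> set (tl (q d)) = {}" if "c \<in> C" "d \<in> C" for c d
  proof -
    have "u = d" if "u \<in> set (p c)" "u \<in> set (tl (q d))" for u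
      using meet[OF \<open>c \<in> C\<close> \<open>d \<in> C\<close> that(1)] that(2) q_split[OF \<open>d \<in> C\<close>] by (metis list.set_intros(2))
    then show ?thesis using q_split[OF \<open>d \<in> C\<close>] by (metis disjoint_iff distinct.simps(2))
  qed
  show ?thesis
  proof (rule linkage_image)
    fix c assume c: "c \<in> C"
    have "last (p c @ tl (q c)) = last (q c)"
    proof (cases "tl (q c) = []")
      case True
      then have "q c = [c]" using q_split[OF c] by simp
      with True show ?thesis using p[OF c] by simp
    qed (simp add: last_tl)
    moreover have "is_path V E (p c @ tl (q c))"
      by (rule is_path_join) (use p[OF c] q[OF c] p_tl[OF c c] in auto)
    moreover have "hd (p c @ tl (q c)) = hd (p c)"
      using p[OF c] by (simp add: is_path_iff)
    ultimately show "is_path V E (p c @ tl (q c)) \<and> hd (p c @ tl (q c)) \<in> A \<and> last (p c @ tl (q c)) \<in> B"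
      using p[OF c] q[OF c] by simp
  next
    fix c d assume cd: "c \<in> C" "d \<in> C" "c \<noteq> d"
    have "set (tl (q c)) \<subseteq> set (q c)" "set (tl (q d)) \<subseteq> set (q d)"
      using q_split cd by (metis set_subset_Cons)+
    then show "set (p c @ tl (q c)) \<inter> set (p d @ tl (q d)) = {}"
      using p_disj[OF cd] q_disj[OF cd] p_tl[OF cd(1,2)] p_tl[OF cd(2,1)] by auto
  qed
qed

lemma linkage_join:
  assumes P: "linkage V E A C P" "card P = card C" and Q: "linkage V E C B Q" "card Q = card C"
    and "finite C" and meet: "\<And>p q. p \<in> P \<Longrightarrow> q \<in> Q \<Longrightarrow> set p \<inter> set q \<subseteq> C"
  shows "\<exists>R. linkage V E A B R \<and> finite R \<and> card R = card C"
proof -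
  have "last ` P = C" "hd ` Q = C"
    using linkage_saturated_target(1)[OF P(1) \<open>finite C\<close> P(2)]
      linkage_saturated_source(1)[OF Q(1) \<open>finite C\<close> Q(2)] .
  define pc where "pc = inv_into P last"
  define qc where "qc = inv_into Q hd"
  have pc: "pc c \<in> P" "last (pc c) = c" if "c \<in> C" for c
    using that \<open>last ` P = C\<close> inv_into_into[of c last P] f_inv_into_f[of c last P]
    unfolding pc_def by auto
  have qc: "qc c \<in> Q" "hd (qc c) = c" if "c \<in> C" for c
    using that \<open>hd ` Q = C\<close> inv_into_into[of c hd Q] f_inv_into_f[of c hd Q]
    unfolding qc_def by auto
  have "linkage V E A B ((\<lambda>c. pc c @ tl (qc c)) ` C) \<and> card ((\<lambda>c. pc c @ tl (qc c)) ` C) = card C"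
  proof (rule linkage_join_indexed)
    fix c assume "c \<in> C"
    then show "is_path V E (pc c) \<and> hd (pc c) \<in> A \<and> last (pc c) = c"
      "is_path V E (qc c) \<and> hd (qc c) = c \<and> last (qc c) \<in> B"
      using pc qc P(1) Q(1) unfolding linkage_def by auto
  next
    fix c d assume cd: "c \<in> C" "d \<in> C" "c \<noteq> d"
    then have "pc c \<noteq> pc d" "qc c \<noteq> qc d" using pc(2) qc(2) by metis+
    then show "set (pc c) \<inter> set (pc d) = {}" "set (qc c) \<inter> set (qc d) = {}"
      using pc(1)[OF cd(1)] pc(1)[OF cd(2)] qc(1)[OF cd(1)] qc(1)[OF cd(2)] P(1) Q(1)
      unfolding linkage_def by blast+
  next
    fix c d u assume cd: "c \<in> C" "d \<in> C" and u: "u \<in> set (pc c)" "u \<in> set (qc d)"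
    have "u \<in> C" using meet[OF pc(1)[OF cd(1)] qc(1)[OF cd(2)]] u by blast
    then have "u \<notin> set (tl (qc d))"
      using linkage_saturated_source(2)[OF Q(1) \<open>finite C\<close> Q(2) qc(1)[OF cd(2)]] by blast
    moreover have "set (qc d) = insert (hd (qc d)) (set (tl (qc d)))"
      using qc(1)[OF cd(2)] Q(1) by (cases "qc d") (auto simp: linkage_def is_path_iff)
    ultimately show "u = d" using u(2) qc(2)[OF cd(2)] by auto
  qed
  moreover have "finite ((\<lambda>c. pc c @ tl (qc c)) ` C)" using \<open>finite C\<close> by simp
  ultimately show ?thesis by blast
qed

section \<open>Menger's theorem\<close>

definition del_edge :: "('a \<Rightarrow> 'a \<Rightarrow> bool) \<Rightarrow> 'a \<Rightarrow> 'a \<Rightarrow> 'a \<Rightarrow> 'a \<Rightarrow> bool" where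
  "del_edge E a b u w \<longleftrightarrow> E u w \<and> {u, w} \<noteq> {a, b}"

lemma del_edge_commute: "del_edge E a b = del_edge E b a"
  by (auto simp: del_edge_def fun_eq_iff insert_commute)

lemma del_edge_le: "del_edge E a b \<le> E"
  by (simp add: del_edge_def le_fun_def)

lemma graph_del_edge: "graph V E \<Longrightarrow> graph V (del_edge E a b)"
  unfolding graph_def del_edge_def by (metis insert_commute)

lemma is_path_del_edge:
  assumes "is_path V E p" "a \<notin> set p \<or> b \<notin> set p"
  shows "is_path V (del_edge E a b) p"
proof -
  have "successively E p" using assms(1) by (simp add: is_path_iff)
  then have "successively (del_edge E a b) p"
  proof (rule successively_mono)
    fix u w assume "u \<in> set p" "w \<in> set p" "E u w"
    then show "del_edge E a b u w" using assms(2) by (auto simp: del_edge_def doubleton_eq_iff)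
  qed
  with assms(1) show ?thesis by (simp add: is_path_iff)
qed

lemma is_path_uses_edge:
  assumes "is_path V E p" "\<not> is_path V (del_edge E x y) p"
  shows "\<exists>a b xs ys. {a, b} = {x, y} \<and> p = xs @ a # b # ys"
proof -
  have "successively E p" "\<not> successively (del_edge E x y) p"
    using assms by (auto simp: is_path_iff)
  then obtain i where i: "Suc i < length p" "{p ! i, p ! Suc i} = {x, y}"
    by (auto simp: successively_conv_nth del_edge_def)
  then have "p = take i p @ p ! i # p ! Suc i # drop (Suc (Suc i)) p"
    by (simp add: Cons_nth_drop_Suc id_take_nth_drop)
  with i show ?thesis by blast
qed

lemma card_edges_del_edge:
  assumes "graph V E" "E x y"
  shows "card {(u, w). del_edge E x y u w} < card {(u, w). E u w}"
proof (rule psubset_card_mono)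
  show "finite {(u, w). E u w}"
  proof (rule finite_subset)
    show "{(u, w). E u w} \<subseteq> V \<times> V" "finite (V \<times> V)" using assms(1) by (auto simp: graph_def)
  qed
  show "{(u, w). del_edge E x y u w} \<subset> {(u, w). E u w}"
    using assms(2) by (auto simp: del_edge_def)
qed

lemma split_path_at_del_edge:
  assumes "is_path V E Q" "\<not> is_path V (del_edge E x y) Q"
  shows "\<exists>a b xs ys. del_edge E x y = del_edge E a b \<and> E a b \<and> Q = xs @ a # b # ys
    \<and> is_path V (del_edge E a b) (xs @ [a]) \<and> is_path V (del_edge E a b) (b # ys)"
proof -
  obtain a b xs ys where ab: "{a, b} = {x, y}" "Q = xs @ a # b # ys"
    using is_path_uses_edge[OF assms] by blast
  then have "del_edge E x y = del_edge E a b" by (simp add: del_edge_def fun_eq_iff)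
  moreover have "E a b" using assms(1) ab(2) by (simp add: is_path_iff successively_append_iff)
  moreover have "distinct Q" using assms(1) by (simp add: is_path_iff)
  then have "is_path V (del_edge E a b) (xs @ [a])" "is_path V (del_edge E a b) (b # ys)"
    using is_path_prefix[of V E xs a "b # ys"] is_path_suffix[of V E "xs @ [a]" b ys] assms(1) ab(2)
    by (auto intro!: is_path_del_edge)
  ultimately show ?thesis using ab(2) by blast
qed

lemma path_through_del_edge:
  assumes "separates V (del_edge E a b) A B T"
    and "is_path V E p" "hd p \<in> A" "last p \<in> B" "set p \<inter> T = {}"
  shows "a \<in> set p \<and> b \<in> set p"
proof (rule ccontr)
  assume "\<not> (a \<in> set p \<and> b \<in> set p)"
  then have "is_path V (del_edge E a b) p" using is_path_del_edge[OF assms(2)] by blast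
  with assms(1,3-5) show False unfolding separates_def by blast
qed

text \<open>A path of G from A to B avoiding T meets T0 + a. Up to its first vertex there it is a
  path of G - ab, contradicting T, unless it passes through b before; but then b would join A
  to B around T0 in G - ab.\<close>

lemma separates_insert_del_edge:
  assumes "a \<noteq> b" and T0: "separates V (del_edge E a b) A B T0"
    and p2: "is_path V (del_edge E a b) p2" "hd p2 = b" "last p2 \<in> B" "set p2 \<inter> T0 = {}"
    and T: "separates V (del_edge E a b) A (insert a T0) T"
  shows "separates V E A B T"
  unfolding separates_def
proof (intro allI impI notI)
  fix p assume p: "is_path V E p" "hd p \<in> A" "last p \<in> B" "set p \<inter> T = {}"
  have "\<exists>x\<in>set p. x \<in> insert a T0"
    using path_through_del_edge[OF T0 p(1-3)] by blast
  then obtain ys x zs where split: "p = ys @ x # zs" "x \<in> insert a T0" "\<forall>y\<in>set ys. y \<notin> insert a T0"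
    using split_list_first_prop[OF \<open>\<exists>x\<in>set p. x \<in> insert a T0\<close>] by blast
  have prefix: "is_path V E (ys @ [x])" "hd (ys @ [x]) = hd p"
    using is_path_prefix p(1) split(1) by (auto simp: hd_append)
  have "b \<notin> T0" using p2 hd_in_set[of p2] by (auto simp: is_path_iff)
  show False
  proof (cases "b \<in> set ys")
    case False
    then have "b \<notin> set (ys @ [x])" using split(2) \<open>b \<notin> T0\<close> \<open>a \<noteq> b\<close> by auto
    then have "is_path V (del_edge E a b) (ys @ [x])" by (intro is_path_del_edge prefix(1) disjI2)
    moreover have "set (ys @ [x]) \<inter> T = {}" using p(4) split(1) by auto
    moreover have "is_path V (del_edge E a b) (ys @ [x]) \<longrightarrow> hd (ys @ [x]) \<in> A
        \<longrightarrow> last (ys @ [x]) \<in> insert a T0 \<longrightarrow> set (ys @ [x]) \<inter> T \<noteq> {}"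
      using T unfolding separates_def by blast
    ultimately show False using prefix(2) p(2) split(2) by simp
  next
    case True
    then obtain cs ds where ys: "ys = cs @ b # ds" by (meson split_list)
    then have "is_path V E (cs @ [b])" using is_path_prefix[of V E cs b "ds @ [x]"] prefix(1) by simp
    moreover have "a \<notin> set (cs @ [b])" using split(3) ys by auto
    ultimately have "is_path V (del_edge E a b) (cs @ [b])" by (intro is_path_del_edge disjI1)
    moreover have "hd (cs @ [b]) = hd p" using split(1) ys by (simp add: hd_append)
    moreover have "set (cs @ [b]) \<inter> T0 = {}" using split(3) ys by auto
    ultimately have "b \<in> source_side V (del_edge E a b) A T0"
      using path_in_source_side[of V "del_edge E a b" "cs @ [b]" A T0] p(2) by simp
    moreover have "b \<in> target_side V (del_edge E a b) B T0"
      using path_in_target_side[OF p2(1,3,4)] is_path_ends_in_set[OF p2(1)] p2(2) by blast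
    ultimately show False using sides_disjoint[OF T0] by blast
  qed
qed

lemma separates_insert_del_edge_target:
  assumes g: "graph V E" and "a \<noteq> b" and T0: "separates V (del_edge E a b) A B T0"
    and p1: "is_path V (del_edge E a b) p1" "hd p1 \<in> A" "last p1 = a" "set p1 \<inter> T0 = {}"
    and T: "separates V (del_edge E a b) (insert b T0) B T"
  shows "separates V E A B T"
proof -
  have g': "graph V (del_edge E b a)" using graph_del_edge[OF g] .
  have "separates V (del_edge E b a) B A T0" "separates V (del_edge E b a) B (insert b T0) T"
    using separates_sym[OF g'] T0 T del_edge_commute by metis+
  moreover have "is_path V (del_edge E b a) (rev p1)"
    using is_path_rev[OF g'] p1(1) del_edge_commute by metis
  moreover have "hd (rev p1) = a" "last (rev p1) \<in> A" "set (rev p1) \<inter> T0 = {}"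
    using p1 by (auto simp: hd_rev last_rev)
  ultimately have "separates V E B A T"
    using separates_insert_del_edge[of b a V E B A T0 "rev p1" T] \<open>a \<noteq> b\<close> by blast
  then show ?thesis using separates_sym[OF g] by blast
qed

lemma separates_insert_end_del_edge:
  assumes "separates V (del_edge E a b) A B T0" "c = a \<or> c = b"
  shows "separates V E A B (insert c T0)"
  unfolding separates_def
proof (intro allI impI notI)
  fix p assume p: "is_path V E p" "hd p \<in> A" "last p \<in> B" "set p \<inter> insert c T0 = {}"
  then have "set p \<inter> T0 = {}" by blast
  with path_through_del_edge[OF assms(1) p(1-3)] p(4) assms(2) show False by blast
qed

lemma linkage_reroute:
  assumes P: "linkage V E A (insert a T) P" "card P = card (insert a T)"
    and T: "finite T" "a \<notin> T" "b \<notin> T" and ab: "E a b" "b \<in> V"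
    and b_off: "\<And>p. p \<in> P \<Longrightarrow> b \<notin> set p"
  shows "\<exists>P'. linkage V E A (insert b T) P' \<and> card P' = card (insert b T)
    \<and> (\<forall>p'\<in>P'. set p' \<subseteq> insert b (\<Union>p\<in>P. set p))"
proof -
  have "last ` P = insert a T" using linkage_saturated_target(1)[OF P(1)] P(2) T(1) by simp
  define pa where "pa = inv_into P last"
  have pa: "pa s \<in> P" "last (pa s) = s" if "s \<in> insert a T" for s
    using that \<open>last ` P = insert a T\<close> inv_into_into[of s last P] f_inv_into_f[of s last P]
    unfolding pa_def by auto
  have P_paths: "is_path V E p \<and> hd p \<in> A" if "p \<in> P" for p
    using P(1) that unfolding linkage_def by blast
  define f where "f s = (if s = b then a else s)" for s
  define p' where "p' s = (if s = b then pa a @ [b] else pa s)" for s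
  have f: "f s \<in> insert a T" "set (p' s) \<subseteq> insert b (set (pa (f s)))" if "s \<in> insert b T" for s
    using that by (auto simp: f_def p'_def)
  have b_in: "s = b" if "s \<in> insert b T" "b \<in> set (p' s)" for s
  proof (rule ccontr)
    assume "s \<noteq> b"
    then have "s \<in> insert a T" "p' s = pa s" using that(1) by (auto simp: p'_def)
    then show False using b_off[OF pa(1)] that(2) by simp
  qed
  have "linkage V E A (insert b T) (p' ` insert b T) \<and> card (p' ` insert b T) = card (insert b T)"
  proof (rule linkage_image)
    fix s assume s: "s \<in> insert b T"
    have "is_path V E (pa a @ [b])"
      using P_paths[OF pa(1)] pa(2) ab b_off[OF pa(1)] by (intro is_path_snoc) auto
    then show "is_path V E (p' s) \<and> hd (p' s) \<in> A \<and> last (p' s) \<in> insert b T"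
      using s T(3) pa[of s] pa[of a] P_paths[OF pa(1)] by (auto simp: p'_def is_path_iff)
  next
    fix s t assume st: "s \<in> insert b T" "t \<in> insert b T" "s \<noteq> t"
    then have "f s \<noteq> f t" using T(2,3) by (auto simp: f_def)
    then have "pa (f s) \<noteq> pa (f t)" using pa(2)[OF f(1)] st by metis
    then have "set (pa (f s)) \<inter> set (pa (f t)) = {}"
      using P(1) pa(1)[OF f(1)[OF st(1)]] pa(1)[OF f(1)[OF st(2)]] unfolding linkage_def by blast
    moreover have "b \<notin> set (p' s) \<or> b \<notin> set (p' t)"
      using st b_in by blast
    ultimately show "set (p' s) \<inter> set (p' t) = {}"
      using f(2)[OF st(1)] f(2)[OF st(2)] b_off pa(1)[OF f(1)] st(1,2) by blast
  qed
  moreover have "\<forall>q\<in>p' ` insert b T. set q \<subseteq> insert b (\<Union>p\<in>P. set p)"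
    using f pa(1) by fastforce
  ultimately show ?thesis by blast
qed

text \<open>Paths of P stay on the A-side of T0 and paths of Q on its B-side, so they meet only
  in T0; rerouting the path of P that ends in a along ab lets the two linkages be joined at
  T0 + b.\<close>

lemma linkage_across_edge:
  assumes sub: "E' \<le> E" and "E a b" "b \<in> V"
    and "finite T0" "a \<notin> T0" "b \<notin> T0" and T0: "separates V E' A B T0"
    and p1: "is_path V E' p1" "hd p1 \<in> A" "last p1 = a" "set p1 \<inter> T0 = {}"
    and p2: "is_path V E' p2" "hd p2 = b" "last p2 \<in> B" "set p2 \<inter> T0 = {}"
    and P: "linkage V E' A (insert a T0) P" "card P = card (insert a T0)"
    and Q: "linkage V E' (insert b T0) B Q" "card Q = card (insert b T0)"
  shows "\<exists>R. linkage V E A B R \<and> finite R \<and> card R = card (insert b T0)"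
proof -
  have "a \<in> source_side V E' A T0"
    using path_in_source_side[OF p1(1,2,4)] is_path_ends_in_set[OF p1(1)] p1(3) by blast
  then have P_side: "set p \<subseteq> source_side V E' A T0 \<union> T0" if "p \<in> P" for p
    using linkage_in_source_side[OF P \<open>finite T0\<close> _ that] by simp
  have "b \<in> target_side V E' B T0"
    using path_in_target_side[OF p2(1,3,4)] is_path_ends_in_set[OF p2(1)] p2(2) by blast
  then have Q_side: "set q \<subseteq> target_side V E' B T0 \<union> T0" if "q \<in> Q" for q
    using linkage_in_target_side[OF Q \<open>finite T0\<close> _ that] by simp
  note sides = sides_disjoint[OF T0] source_side_disjoint[of V E' A T0]
  have meet: "set p \<inter> set q \<subseteq> T0" if "p \<in> P" "q \<in> Q" for p q
    using P_side[OF that(1)] Q_side[OF that(2)] sides by blast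
  have b_off: "b \<notin> set p" if "p \<in> P" for p
    using P_side[OF that] sides \<open>b \<in> target_side V E' B T0\<close> \<open>b \<notin> T0\<close> by blast
  note PE = linkage_mono[OF P(1) sub] and QE = linkage_mono[OF Q(1) sub]
  obtain P' where P': "linkage V E A (insert b T0) P'" "card P' = card (insert b T0)"
    "\<forall>p'\<in>P'. set p' \<subseteq> insert b (\<Union>p\<in>P. set p)"
    using linkage_reroute[OF PE P(2) \<open>finite T0\<close> \<open>a \<notin> T0\<close> \<open>b \<notin> T0\<close> \<open>E a b\<close> \<open>b \<in> V\<close> b_off]
    by blast
  have "set p' \<inter> set q \<subseteq> insert b T0" if "p' \<in> P'" "q \<in> Q" for p' q
    using P'(3) that meet by blast
  then show ?thesis using linkage_join[OF P'(1,2) QE Q(2)] \<open>finite T0\<close> by simp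
qed

text \<open>Diestel's inductive step: every A--B path of G avoiding the small separator T0 of G - ab
  uses the edge ab, so T0 + a and T0 + b are minimum A--B separators of G, and induction in
  G - ab provides the linkages from A to T0 + a and from T0 + b to B.\<close>

lemma menger_del_edge_step:
  assumes g: "graph V E" and ab: "E a b"
    and IH: "\<And>A B. (\<And>T. T \<subseteq> V \<Longrightarrow> separates V (del_edge E a b) A B T \<Longrightarrow> k \<le> card T)
      \<Longrightarrow> \<exists>P. linkage V (del_edge E a b) A B P \<and> finite P \<and> card P = k"
    and min_sep: "\<And>T. T \<subseteq> V \<Longrightarrow> separates V E A B T \<Longrightarrow> k \<le> card T"
    and T0: "T0 \<subseteq> V" "separates V (del_edge E a b) A B T0" "card T0 < k"
    and p1: "is_path V (del_edge E a b) p1" "hd p1 \<in> A" "last p1 = a" "set p1 \<inter> T0 = {}"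
    and p2: "is_path V (del_edge E a b) p2" "hd p2 = b" "last p2 \<in> B" "set p2 \<inter> T0 = {}"
  shows "\<exists>P. linkage V E A B P \<and> finite P \<and> card P = k"
proof -
  have "a \<noteq> b" "a \<in> V" "b \<in> V" using g ab by (auto simp: graph_def)
  have "a \<notin> T0" using is_path_ends_in_set[OF p1(1)] p1(3,4) by blast
  have "b \<notin> T0" using is_path_ends_in_set[OF p2(1)] p2(2,4) by blast
  have "finite T0" using g T0(1) finite_subset by (auto simp: graph_def)
  have card_insert: "card (insert c T0) = k" if "c = a \<or> c = b" for c
  proof (rule antisym)
    show "card (insert c T0) \<le> k" using T0(3) \<open>finite T0\<close> by (simp add: card_insert_if)
    show "k \<le> card (insert c T0)"
      using min_sep separates_insert_end_del_edge[OF T0(2) that] T0(1) that \<open>a \<in> V\<close> \<open>b \<in> V\<close> by blast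
  qed
  have "\<exists>P. linkage V (del_edge E a b) A (insert a T0) P \<and> finite P \<and> card P = k"
  proof (rule IH)
    fix T assume "T \<subseteq> V" and T: "separates V (del_edge E a b) A (insert a T0) T"
    have "separates V E A B T" by (rule separates_insert_del_edge[OF \<open>a \<noteq> b\<close> T0(2) p2 T])
    with \<open>T \<subseteq> V\<close> show "k \<le> card T" by (rule min_sep)
  qed
  then obtain P where P: "linkage V (del_edge E a b) A (insert a T0) P" "card P = k" by blast
  have "\<exists>Q. linkage V (del_edge E a b) (insert b T0) B Q \<and> finite Q \<and> card Q = k"
  proof (rule IH)
    fix T assume "T \<subseteq> V" and T: "separates V (del_edge E a b) (insert b T0) B T"
    have "separates V E A B T"
      by (rule separates_insert_del_edge_target[OF g \<open>a \<noteq> b\<close> T0(2) p1 T])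
    with \<open>T \<subseteq> V\<close> show "k \<le> card T" by (rule min_sep)
  qed
  then obtain Q where Q: "linkage V (del_edge E a b) (insert b T0) B Q" "card Q = k" by blast
  have "\<exists>R. linkage V E A B R \<and> finite R \<and> card R = card (insert b T0)"
    by (rule linkage_across_edge[OF del_edge_le ab \<open>b \<in> V\<close> \<open>finite T0\<close>
        \<open>a \<notin> T0\<close> \<open>b \<notin> T0\<close> T0(2) p1 p2 P(1) _ Q(1)]) (use P(2) Q(2) card_insert in auto)
  then show ?thesis using card_insert by simp
qed

lemma menger_no_edges:
  assumes "finite V" "\<And>x y. \<not> E x y"
    and min_sep: "\<And>T. T \<subseteq> V \<Longrightarrow> separates V E A B T \<Longrightarrow> k \<le> card T"
  shows "\<exists>P. linkage V E A B P \<and> finite P \<and> card P = k"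
proof -
  have trivial: "p = [hd p]" if "is_path V E p" for p
    using that assms(2) by (cases p; cases "tl p") (auto simp: is_path_iff)
  have "separates V E A B (A \<inter> B \<inter> V)"
    unfolding separates_def
  proof (intro allI impI)
    fix p assume p: "is_path V E p" "hd p \<in> A" "last p \<in> B"
    obtain x where "p = [x]" using trivial[OF p(1)] by blast
    with p show "set p \<inter> (A \<inter> B \<inter> V) \<noteq> {}" by (simp add: is_path_iff)
  qed
  then have "k \<le> card (A \<inter> B \<inter> V)" using min_sep by blast
  then obtain C where C: "C \<subseteq> A \<inter> B \<inter> V" "card C = k"
    by (meson obtain_subset_with_card_n)
  have "linkage V E A B ((\<lambda>x. [x]) ` C) \<and> card ((\<lambda>x. [x]) ` C) = card C"
    using C(1) by (intro linkage_image) (auto simp: is_path_iff)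
  moreover have "finite C" using C(1) assms(1) finite_subset by blast
  ultimately show ?thesis using C(2) by blast
qed

theorem menger:
  assumes "graph V E" and "\<And>T. T \<subseteq> V \<Longrightarrow> separates V E A B T \<Longrightarrow> k \<le> card T"
  shows "\<exists>P. linkage V E A B P \<and> finite P \<and> card P = k"
  using assms
proof (induction "card {(u, w). E u w}" arbitrary: E A B k rule: less_induct)
  case less
  note g = less.prems(1) and min_sep = less.prems(2)
  show ?case
  proof (cases "\<exists>x y. E x y")
    case False
    with g show ?thesis by (intro menger_no_edges min_sep) (auto simp: graph_def)
  next
    case True
    then obtain x y where "E x y" by blast
    note IH = less.hyps[OF card_edges_del_edge[OF g \<open>E x y\<close>] graph_del_edge[OF g]]
    show ?thesis
    proof (cases "\<forall>T. T \<subseteq> V \<longrightarrow> separates V (del_edge E x y) A B T \<longrightarrow> k \<le> card T")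
      case True
      have "\<exists>P. linkage V (del_edge E x y) A B P \<and> finite P \<and> card P = k"
        by (rule IH) (use True in blast)
      then obtain P where P: "linkage V (del_edge E x y) A B P" "finite P" "card P = k"
        by blast
      with linkage_mono[OF P(1) del_edge_le] show ?thesis by blast
    next
      case False
      then obtain T0 where T0: "T0 \<subseteq> V" "separates V (del_edge E x y) A B T0" "card T0 < k"
        by (auto simp: not_le)
      have "\<not> separates V E A B T0" using min_sep[OF T0(1)] T0(3) by fastforce
      then obtain Q where Q: "is_path V E Q" "hd Q \<in> A" "last Q \<in> B" "set Q \<inter> T0 = {}"
        unfolding separates_def by blast
      have "\<not> is_path V (del_edge E x y) Q"
        using T0(2) Q(2-4) unfolding separates_def by blast
      then obtain a b xs ys where E': "del_edge E x y = del_edge E a b" and "E a b"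
        and ab: "Q = xs @ a # b # ys" "is_path V (del_edge E a b) (xs @ [a])"
          "is_path V (del_edge E a b) (b # ys)"
        using split_path_at_del_edge[OF Q(1)] by blast
      show ?thesis
        by (rule menger_del_edge_step[OF g \<open>E a b\<close> IH[unfolded E'] min_sep T0[unfolded E'] ab(2) _ _ _ ab(3)])
          (use Q ab(1) in \<open>auto simp: hd_append\<close>)
    qed
  qed
qed

section \<open>Fans\<close>

lemma nbhd_subset_vertices: "graph V E \<Longrightarrow> nbhd E X \<subseteq> V"
  by (auto simp: graph_def nbhd_def)

lemma path_leaves_set:
  "successively E p \<Longrightarrow> p \<noteq> [] \<Longrightarrow> hd p \<in> X \<Longrightarrow> last p \<notin> X \<Longrightarrow> \<exists>z\<in>set p. z \<in> nbhd E X"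
proof (induction p rule: induct_list012)
  case (3 x y zs)
  show ?case
  proof (cases "y \<in> X")
    case True
    with 3 show ?thesis by (auto simp: successively_Cons)
  next
    case False
    with 3 have "y \<in> nbhd E X" by (auto simp: nbhd_def successively_Cons)
    then show ?thesis by auto
  qed
qed auto

text \<open>The paths of a fan meet only in its centre, which is not in N(X), so they leave X
  through distinct vertices.\<close>

lemma fan_length_le_card_nbhd:
  assumes g: "graph V E" and fan: "fan V E v S Ps" and "v \<in> X" "X \<inter> S = {}"
  shows "length Ps \<le> card (nbhd E X)"
proof -
  have "\<exists>z. z \<in> set (Ps ! i) \<and> z \<in> nbhd E X" if "i < length Ps" for i
  proof -
    have "is_path V E (Ps ! i)" "hd (Ps ! i) = v" "last (Ps ! i) \<in> S"
      using fan that unfolding fan_def by auto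
    then show ?thesis
      using path_leaves_set[of E "Ps ! i" X] \<open>v \<in> X\<close> \<open>X \<inter> S = {}\<close> by (auto simp: is_path_iff)
  qed
  then obtain h where h: "\<And>i. i < length Ps \<Longrightarrow> h i \<in> set (Ps ! i) \<and> h i \<in> nbhd E X"
    by metis
  have "inj_on h {..<length Ps}"
  proof (rule inj_onI, rule ccontr)
    fix i j assume ij: "i \<in> {..<length Ps}" "j \<in> {..<length Ps}" "h i = h j" "i \<noteq> j"
    then have "set (Ps ! i) \<inter> set (Ps ! j) = {v}"
      using fan unfolding fan_def by (metis Int_commute lessThan_iff linorder_neqE_nat)
    then have "h i = v" using h ij by (metis IntI lessThan_iff singletonD)
    then show False using h[of i] ij(1) \<open>v \<in> X\<close> by (simp add: nbhd_def)
  qed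
  moreover have "h ` {..<length Ps} \<subseteq> nbhd E X" using h by auto
  moreover have "finite (nbhd E X)"
    using finite_subset[OF nbhd_subset_vertices[OF g]] g by (simp add: graph_def)
  ultimately show ?thesis using card_inj_on_le by fastforce
qed

lemma induced_connected_reach_within:
  assumes g: "graph V E" and "W \<subseteq> V" "v \<in> W"
  shows "induced_connected V E {u. reach_within E W v u}"
  unfolding induced_connected_def
proof (intro ballI)
  fix x y assume "x \<in> {u. reach_within E W v u}" "y \<in> {u. reach_within E W v u}"
  then have vx: "reach_within E W v x" and vy: "reach_within E W v y" by auto
  have "x \<in> W" using reach_within_closed[OF vx \<open>v \<in> W\<close>] .
  have "reach_within E W x y" using reach_within_sym[OF g vx] vy by (rule rtranclp_trans)
  then obtain p where p: "is_path V E p" "hd p = x" "last p = y" "set p \<subseteq> W"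
    using path_of_reach_within[OF _ \<open>x \<in> W\<close> \<open>W \<subseteq> V\<close>] by blast
  have "set p \<subseteq> {u. reach_within E W v u}"
  proof
    fix z assume "z \<in> set p"
    then have "reach_within E W x z"
      using reach_within_to_vertex[of E p W z] p by (simp add: is_path_iff)
    with vx show "z \<in> {u. reach_within E W v u}" by (simp add: rtranclp_trans[OF vx])
  qed
  with p show "\<exists>p. is_path V E p \<and> set p \<subseteq> {u. reach_within E W v u} \<and> hd p = x \<and> last p = y"
    by blast
qed

lemma nbhd_reach_within_disjoint:
  assumes "v \<in> W"
  shows "nbhd E {u. reach_within E W v u} \<inter> W = {}"
proof (intro equalityI subsetI)
  fix u assume "u \<in> nbhd E {u. reach_within E W v u} \<inter> W"
  then obtain x where vx: "reach_within E W v x" and "E x u" "u \<in> W" "\<not> reach_within E W v u"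
    unfolding nbhd_def by blast
  moreover have "x \<in> W" using reach_within_closed[OF vx assms] .
  ultimately have "reach_within E W v u" and "\<not> reach_within E W v u"
    by (auto intro: rtranclp.rtrancl_into_rtrancl[OF vx])
  then show "u \<in> {}" by blast
qed simp

definition del_vertex :: "('a \<Rightarrow> 'a \<Rightarrow> bool) \<Rightarrow> 'a \<Rightarrow> 'a \<Rightarrow> 'a \<Rightarrow> bool" where
  "del_vertex E v x y \<longleftrightarrow> E x y \<and> x \<noteq> v \<and> y \<noteq> v"

lemma graph_del_vertex: "graph V E \<Longrightarrow> graph (V - {v}) (del_vertex E v)"
  by (auto simp: graph_def del_vertex_def)

lemma is_path_del_vertex:
  assumes "is_path V E p" "v \<notin> set p"
  shows "is_path (V - {v}) (del_vertex E v) p"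
proof -
  have "successively E p" using assms(1) by (simp add: is_path_iff)
  then have "successively (del_vertex E v) p"
    by (rule successively_mono) (use assms(2) in \<open>auto simp: del_vertex_def\<close>)
  with assms show ?thesis by (auto simp: is_path_iff)
qed

lemma k_linked_of_linkage:
  assumes "v \<in> V" and P: "linkage (V - {v}) (del_vertex E v) {u. E v u} S P" "finite P" "card P = k"
  shows "k_linked V E k v S"
proof -
  obtain xs where xs: "set xs = P" "distinct xs" using finite_distinct_list[OF P(2)] by blast
  have path: "is_path V E (v # p) \<and> hd (v # p) = v \<and> last (v # p) \<in> S" if "p \<in> P" for p
  proof -
    have p: "is_path (V - {v}) (del_vertex E v) p" "E v (hd p)" "last p \<in> S"
      using P(1) that unfolding linkage_def by auto
    then have "successively E p" using successively_mono[of "del_vertex E v" p]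
      by (auto simp: is_path_iff del_vertex_def)
    with p \<open>v \<in> V\<close> show ?thesis by (auto simp: is_path_iff successively_Cons)
  qed
  have "fan V E v S (map ((#) v) xs)"
    unfolding fan_def
  proof (rule conjI; intro ballI allI impI)
    fix q assume "q \<in> set (map ((#) v) xs)"
    then show "is_path V E q \<and> hd q = v \<and> last q \<in> S" using path xs(1) by auto
  next
    fix i j assume ij: "i < j \<and> j < length (map ((#) v) xs)"
    then have "xs ! i \<noteq> xs ! j" "xs ! i \<in> P" "xs ! j \<in> P"
      using xs by (auto simp: nth_eq_iff_index_eq)
    then have "set (xs ! i) \<inter> set (xs ! j) = {}" using P(1) unfolding linkage_def by blast
    then show "set (map ((#) v) xs ! i) \<inter> set (map ((#) v) xs ! j) = {v}" using ij by auto
  qed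
  moreover have "length (map ((#) v) xs) = k" using xs P(3) distinct_card by fastforce
  ultimately show ?thesis unfolding k_linked_def by blast
qed

lemma reach_within_misses_separated:
  assumes T: "separates (V - {v}) (del_vertex E v) {u. E v u} S T" and "v \<in> V - T" "v \<notin> S"
  shows "{u. reach_within E (V - T) v u} \<inter> S = {}"
proof (rule ccontr)
  assume "{u. reach_within E (V - T) v u} \<inter> S \<noteq> {}"
  then obtain s where "s \<in> S" and vs: "reach_within E (V - T) v s" by auto
  obtain p where p: "is_path V E p" "hd p = v" "last p = s" "set p \<subseteq> V - T"
    using path_of_reach_within[OF vs \<open>v \<in> V - T\<close> Diff_subset] by blast
  have "s \<noteq> v" using \<open>s \<in> S\<close> \<open>v \<notin> S\<close> by blast
  then obtain q where q: "p = v # q" "q \<noteq> []"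
    using p(1-3) by (cases p) (auto simp: is_path_iff split: if_splits)
  have "is_path V E q" using p(1) q by (simp add: is_path_iff successively_Cons)
  moreover have "v \<notin> set q" using p(1) q(1) by (simp add: is_path_iff)
  ultimately have "is_path (V - {v}) (del_vertex E v) q" by (rule is_path_del_vertex)
  moreover have "hd q \<in> {u. E v u}" using p(1) q by (simp add: is_path_iff successively_Cons)
  moreover have "last q \<in> S" using p(3) \<open>s \<in> S\<close> q by simp
  moreover have "set q \<inter> T = {}" using p(4) q(1) by auto
  ultimately show False using T unfolding separates_def by blast
qed

text \<open>The fan lemma: by Menger's theorem in G - v, either v is k-linked to S or fewer than k
  vertices T separate the neighbours of v from S; then the component of v in G - T misses S
  and all its neighbours lie in T.\<close>

lemma k_linked_or_small_nbhd:
  assumes g: "graph V E" and "v \<in> V" "v \<notin> S"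
  shows "k_linked V E k v S \<or>
    (\<exists>X. X \<subseteq> V \<and> v \<in> X \<and> induced_connected V E X \<and> X \<inter> S = {} \<and> card (nbhd E X) < k)"
proof (cases "\<forall>T. T \<subseteq> V - {v} \<longrightarrow> separates (V - {v}) (del_vertex E v) {u. E v u} S T \<longrightarrow> k \<le> card T")
  case True
  have "\<exists>P. linkage (V - {v}) (del_vertex E v) {u. E v u} S P \<and> finite P \<and> card P = k"
    by (rule menger[OF graph_del_vertex[OF g]]) (use True in blast)
  then obtain P where "linkage (V - {v}) (del_vertex E v) {u. E v u} S P" "finite P" "card P = k"
    by blast
  then have "k_linked V E k v S" by (rule k_linked_of_linkage[OF \<open>v \<in> V\<close>])
  then show ?thesis ..
next
  case False
  then obtain T where T: "T \<subseteq> V - {v}" "separates (V - {v}) (del_vertex E v) {u. E v u} S T" "card T < k"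
    by (auto simp: not_le)
  define X where "X = {u. reach_within E (V - T) v u}"
  have "v \<in> V - T" using T(1) \<open>v \<in> V\<close> by blast
  have "X \<subseteq> V"
  proof
    fix u assume "u \<in> X"
    then have "reach_within E (V - T) v u" by (simp add: X_def)
    then have "u \<in> V - T" using \<open>v \<in> V - T\<close> by (rule reach_within_closed)
    then show "u \<in> V" by blast
  qed
  moreover have "v \<in> X" by (simp add: X_def)
  moreover have "induced_connected V E X"
    unfolding X_def by (rule induced_connected_reach_within[OF g Diff_subset \<open>v \<in> V - T\<close>])
  moreover have "X \<inter> S = {}"
    unfolding X_def by (rule reach_within_misses_separated[OF T(2) \<open>v \<in> V - T\<close> \<open>v \<notin> S\<close>])
  moreover have "card (nbhd E X) \<le> card T"
  proof (rule card_mono)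
    show "finite T" using finite_subset[OF T(1)] g by (simp add: graph_def)
    show "nbhd E X \<subseteq> T"
      using nbhd_reach_within_disjoint[OF \<open>v \<in> V - T\<close>] nbhd_subset_vertices[OF g] by (auto simp: X_def)
  qed
  then have "card (nbhd E X) < k" using T(3) by simp
  ultimately show ?thesis by blast
qed

section \<open>Vector connectivity sets\<close>

lemma vc_set_meets_set_with_small_nbhd:
  assumes g: "graph V E" and vc: "vc_set V E r S"
    and X: "X \<noteq> {}" "X \<subseteq> V" "card (nbhd E X) < Rmax r X"
  shows "S \<inter> X \<noteq> {}"
proof
  assume "S \<inter> X = {}"
  have "finite X" using finite_subset[OF X(2)] g by (simp add: graph_def)
  then have "Rmax r X \<in> r ` X" unfolding Rmax_def using X(1) by (intro Max_in) auto
  then obtain x where x: "x \<in> X" "r x = Rmax r X" by (metis imageE)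
  have "x \<in> V - S" using x(1) X(2) \<open>S \<inter> X = {}\<close> by blast
  then obtain Ps where Ps: "fan V E x S Ps" "length Ps = r x"
    using vc unfolding vc_set_def k_linked_def by blast
  have "X \<inter> S = {}" using \<open>S \<inter> X = {}\<close> by blast
  then have "r x \<le> card (nbhd E X)" using fan_length_le_card_nbhd[OF g Ps(1) x(1)] Ps(2) by simp
  with X(3) x(2) show False by simp
qed

lemma vc_set_if_meets_connected_sets_with_small_nbhd:
  assumes g: "graph V E"
    and H: "\<And>X. X \<noteq> {} \<Longrightarrow> X \<subseteq> V \<Longrightarrow> induced_connected V E X \<Longrightarrow> card (nbhd E X) < Rmax r X
      \<Longrightarrow> S \<inter> X \<noteq> {}"
  shows "vc_set V E r S"
  unfolding vc_set_def
proof (rule ballI, rule ccontr)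
  fix v assume "v \<in> V - S" "\<not> k_linked V E (r v) v S"
  then obtain X where X: "X \<subseteq> V" "v \<in> X" "induced_connected V E X" "X \<inter> S = {}"
    "card (nbhd E X) < r v"
    using k_linked_or_small_nbhd[OF g, of v S "r v"] by blast
  have "finite X" using finite_subset[OF X(1)] g by (simp add: graph_def)
  then have "r v \<le> Rmax r X" unfolding Rmax_def using X(2) by simp
  then have "S \<inter> X \<noteq> {}" using H[OF _ X(1,3)] X(2,5) by auto
  with X(4) show False by blast
qed

theorem proposition1:
  fixes V :: "'a set" and E :: "'a \<Rightarrow> 'a \<Rightarrow> bool" and r :: "'a \<Rightarrow> nat" and S :: "'a set"
  assumes "graph V E" and "S \<subseteq> V"
  shows "vc_set V E r S \<longleftrightarrow>
    (\<forall>X. X \<noteq> {} \<and> X \<subseteq> V \<and> induced_connected V E X \<and> Rmax r X > card (nbhd E X)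
         \<longrightarrow> S \<inter> X \<noteq> {})"
proof
  assume "vc_set V E r S"
  then show "\<forall>X. X \<noteq> {} \<and> X \<subseteq> V \<and> induced_connected V E X \<and> Rmax r X > card (nbhd E X)
      \<longrightarrow> S \<inter> X \<noteq> {}"
    using vc_set_meets_set_with_small_nbhd[OF assms(1)] by blast
next
  assume "\<forall>X. X \<noteq> {} \<and> X \<subseteq> V \<and> induced_connected V E X \<and> Rmax r X > card (nbhd E X)
      \<longrightarrow> S \<inter> X \<noteq> {}"
  then show "vc_set V E r S"
    by (intro vc_set_if_meets_connected_sets_with_small_nbhd[OF assms(1)]) blast
qed

end
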